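(* Let $\mathcal{D}$ be a triangulated category with small coproducts and let $T_1,T_2$ be exceptional objects of $\mathcal{D}$ such that (A1) $\operatorname{Hom}_{\mathcal{D}}(T_1,T_2[k])=0$ for all $k\in\mathbb{Z}$ and (A2) $\operatorname{Hom}_{\mathcal{D}}(T_2,T_1[k])=0$ for all $k\in\mathbb{Z}\setminus\{0,1\}$. Let $\alpha:T_2\to T_1[1]$ be any morphism and $T_1\to T\xrightarrow{\gamma}T_2\xrightarrow{\alpha}T_1[1]$ a triangle. Then $T$ is exceptional if and only if the map $\operatorname{End}_{\mathcal{D}}(T_2)\oplus\operatorname{End}_{\mathcal{D}}(T_1)\to\operatorname{Hom}_{\mathcal{D}}(T_2,T_1[1])$, $(f,g)\mapsto\alpha\circ f+g[1]\circ\alpha$, is surjective.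
   Context: An object $T$ is exceptional if $\operatorname{Hom}_{\mathcal{D}}(T,T[k])=0$ for all nonzero integers $k$; $[1]$ is the shift functor. *)

theory Defs
  imports Main
begin

text \<open>Objects have type 'o, morphisms type 'm; Hom X Y is the set of morphisms X -> Y.
  comp g f is the composite "g after f".  add X Y / zero X Y / neg X Y give the
  abelian group structure on Hom X Y.  Sh is the shift (an additive automorphism,
  acting on objects by Sh and on morphisms by shm).  dist X Y Z u v w means that
  X -u-> Y -v-> Z -w-> X[1] is a distinguished triangle.\<close>

definition is_zero_obj :: "('o \<Rightarrow> 'o \<Rightarrow> 'm set) \<Rightarrow> ('o \<Rightarrow> 'o \<Rightarrow> 'm) \<Rightarrow> 'o \<Rightarrow> bool" where
  "is_zero_obj Hom zero Z \<longleftrightarrow> (\<forall>X. Hom Z X = {zero Z X} \<and> Hom X Z = {zero X Z})"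

locale triangulated =
  fixes Hom :: "'o \<Rightarrow> 'o \<Rightarrow> 'm set"
    and comp :: "'m \<Rightarrow> 'm \<Rightarrow> 'm"
    and ident :: "'o \<Rightarrow> 'm"
    and add :: "'o \<Rightarrow> 'o \<Rightarrow> 'm \<Rightarrow> 'm \<Rightarrow> 'm"
    and zero :: "'o \<Rightarrow> 'o \<Rightarrow> 'm"
    and neg :: "'o \<Rightarrow> 'o \<Rightarrow> 'm \<Rightarrow> 'm"
    and Sh :: "'o \<Rightarrow> 'o"
    and shm :: "'m \<Rightarrow> 'm"
    and dist :: "'o \<Rightarrow> 'o \<Rightarrow> 'o \<Rightarrow> 'm \<Rightarrow> 'm \<Rightarrow> 'm \<Rightarrow> bool"
  assumes comp_closed: "f \<in> Hom X Y \<Longrightarrow> g \<in> Hom Y Z \<Longrightarrow> comp g f \<in> Hom X Z"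
    and comp_assoc: "f \<in> Hom W X \<Longrightarrow> g \<in> Hom X Y \<Longrightarrow> h \<in> Hom Y Z \<Longrightarrow>
          comp h (comp g f) = comp (comp h g) f"
    and ident_closed: "ident X \<in> Hom X X"
    and ident_left: "f \<in> Hom X Y \<Longrightarrow> comp (ident Y) f = f"
    and ident_right: "f \<in> Hom X Y \<Longrightarrow> comp f (ident X) = f"
    and add_closed: "f \<in> Hom X Y \<Longrightarrow> g \<in> Hom X Y \<Longrightarrow> add X Y f g \<in> Hom X Y"
    and add_assoc: "f \<in> Hom X Y \<Longrightarrow> g \<in> Hom X Y \<Longrightarrow> h \<in> Hom X Y \<Longrightarrow>
          add X Y (add X Y f g) h = add X Y f (add X Y g h)"
    and add_comm: "f \<in> Hom X Y \<Longrightarrow> g \<in> Hom X Y \<Longrightarrow> add X Y f g = add X Y g f"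
    and zero_closed: "zero X Y \<in> Hom X Y"
    and zero_left: "f \<in> Hom X Y \<Longrightarrow> add X Y (zero X Y) f = f"
    and neg_closed: "f \<in> Hom X Y \<Longrightarrow> neg X Y f \<in> Hom X Y"
    and neg_left: "f \<in> Hom X Y \<Longrightarrow> add X Y (neg X Y f) f = zero X Y"
    and comp_add_left: "f \<in> Hom X Y \<Longrightarrow> g \<in> Hom Y Z \<Longrightarrow> g' \<in> Hom Y Z \<Longrightarrow>
          comp (add Y Z g g') f = add X Z (comp g f) (comp g' f)"
    and comp_add_right: "f \<in> Hom X Y \<Longrightarrow> f' \<in> Hom X Y \<Longrightarrow> g \<in> Hom Y Z \<Longrightarrow>
          comp g (add X Y f f') = add X Z (comp g f) (comp g f')"
    and has_zero_obj: "\<exists>Z. is_zero_obj Hom zero Z"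
    and has_biproducts: "\<And>X Y. \<exists>P p1 p2 i1 i2.
          p1 \<in> Hom P X \<and> p2 \<in> Hom P Y \<and> i1 \<in> Hom X P \<and> i2 \<in> Hom Y P \<and>
          comp p1 i1 = ident X \<and> comp p2 i2 = ident Y \<and>
          comp p1 i2 = zero Y X \<and> comp p2 i1 = zero X Y \<and>
          add P P (comp i1 p1) (comp i2 p2) = ident P"
    and Sh_bij: "bij Sh"
    and shm_bij: "bij_betw shm (Hom X Y) (Hom (Sh X) (Sh Y))"
    and shm_ident: "shm (ident X) = ident (Sh X)"
    and shm_comp: "f \<in> Hom X Y \<Longrightarrow> g \<in> Hom Y Z \<Longrightarrow> shm (comp g f) = comp (shm g) (shm f)"
    and shm_add: "f \<in> Hom X Y \<Longrightarrow> g \<in> Hom X Y \<Longrightarrow>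
          shm (add X Y f g) = add (Sh X) (Sh Y) (shm f) (shm g)"
    and dist_typed: "dist X Y Z u v w \<Longrightarrow> u \<in> Hom X Y \<and> v \<in> Hom Y Z \<and> w \<in> Hom Z (Sh X)"
    and TR1_iso: "dist X Y Z u v w \<Longrightarrow>
          u' \<in> Hom X' Y' \<Longrightarrow> v' \<in> Hom Y' Z' \<Longrightarrow> w' \<in> Hom Z' (Sh X') \<Longrightarrow>
          a \<in> Hom X X' \<Longrightarrow> b \<in> Hom Y Y' \<Longrightarrow> c \<in> Hom Z Z' \<Longrightarrow>
          a' \<in> Hom X' X \<Longrightarrow> b' \<in> Hom Y' Y \<Longrightarrow> c' \<in> Hom Z' Z \<Longrightarrow>
          comp a' a = ident X \<Longrightarrow> comp a a' = ident X' \<Longrightarrow>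
          comp b' b = ident Y \<Longrightarrow> comp b b' = ident Y' \<Longrightarrow>
          comp c' c = ident Z \<Longrightarrow> comp c c' = ident Z' \<Longrightarrow>
          comp u' a = comp b u \<Longrightarrow> comp v' b = comp c v \<Longrightarrow> comp w' c = comp (shm a) w \<Longrightarrow>
          dist X' Y' Z' u' v' w'"
    and TR1_ident: "is_zero_obj Hom zero Z \<Longrightarrow> dist X X Z (ident X) (zero X Z) (zero Z (Sh X))"
    and TR1_ext: "u \<in> Hom X Y \<Longrightarrow> \<exists>Z v w. dist X Y Z u v w"
    and TR2: "u \<in> Hom X Y \<Longrightarrow>
          dist X Y Z u v w \<longleftrightarrow> dist Y Z (Sh X) v w (neg (Sh X) (Sh Y) (shm u))"
    and TR3: "dist X Y Z u v w \<Longrightarrow> dist X' Y' Z' u' v' w' \<Longrightarrow>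
          f \<in> Hom X X' \<Longrightarrow> g \<in> Hom Y Y' \<Longrightarrow> comp u' f = comp g u \<Longrightarrow>
          \<exists>h\<in>Hom Z Z'. comp v' g = comp h v \<and> comp w' h = comp (shm f) w"
    and TR4: "dist X Y Z' u j k \<Longrightarrow> dist Y Z X' v l i \<Longrightarrow> dist X Z Y' (comp v u) m n \<Longrightarrow>
          \<exists>f\<in>Hom Z' Y'. \<exists>g\<in>Hom Y' X'.
             dist Z' Y' X' f g (comp (shm j) i) \<and>
             comp f j = comp m v \<and> comp g m = l \<and> comp n f = k \<and>
             comp (shm u) n = comp i g"

text \<open>Existence of coproducts of all families indexed by subsets of the (small) type 'i.\<close>
definition has_coproducts_indexed_by ::
  "'i itself \<Rightarrow> ('o \<Rightarrow> 'o \<Rightarrow> 'm set) \<Rightarrow> ('m \<Rightarrow> 'm \<Rightarrow> 'm) \<Rightarrow> bool" where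
  "has_coproducts_indexed_by _ Hom cmp \<longleftrightarrow>
     (\<forall>(I :: 'i set) (F :: 'i \<Rightarrow> 'o). \<exists>C \<iota>.
        (\<forall>i\<in>I. \<iota> i \<in> Hom (F i) C) \<and>
        (\<forall>Y \<phi>. (\<forall>i\<in>I. \<phi> i \<in> Hom (F i) Y) \<longrightarrow>
            (\<exists>!h. h \<in> Hom C Y \<and> (\<forall>i\<in>I. cmp h (\<iota> i) = \<phi> i))))"

definition shift_int :: "('o \<Rightarrow> 'o) \<Rightarrow> int \<Rightarrow> 'o \<Rightarrow> 'o" where
  "shift_int Sh k X = (if 0 \<le> k then (Sh ^^ nat k) X else (inv Sh ^^ nat (- k)) X)"

definition exceptional :: "('o \<Rightarrow> 'o \<Rightarrow> 'm set) \<Rightarrow> ('o \<Rightarrow> 'o \<Rightarrow> 'm) \<Rightarrow> ('o \<Rightarrow> 'o) \<Rightarrow> 'o \<Rightarrow> bool" where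
  "exceptional Hom zero Sh T \<longleftrightarrow>
     (\<forall>k::int. k \<noteq> 0 \<longrightarrow> Hom T (shift_int Sh k T) = {zero T (shift_int Sh k T)})"

end

theory Submission
  imports Defs
begin

(* Write Hom(X,Y) = 0 for "every morphism X -> Y is zero".  For a
   distinguished triangle X -> Y -> Z -> X[1], the functors Hom(W,-) and Hom(-,W) are
   exact at Y, so vanishing of Hom(X[-k],-) and Hom(-,Z[k]) propagates from the outer
   terms of the triangle to the middle one.  Applied to T1 -> T -> T2 -> T1[1], the
   hypotheses (A1), (A2) and exceptionality of T1, T2 give Hom(T,T[k]) = 0 for every
   k outside {0,1}; hence T is exceptional iff Hom(T,T[1]) = 0.  This last condition is
   equivalent to surjectivity of (f,g) |-> alpha f + g[1] alpha by a diagram chase in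
   the rotations of the triangle: a map T -> T[1] factors as T -> T2 -> T1[1] -> T[1],
   and conversely any chi : T2 -> T1[1] is corrected by g[1] alpha and alpha f until
   it dies under beta[1]. *)

lemma shift_int_0: "shift_int Sh 0 X = X"
  by (simp add: shift_int_def)

lemma shift_int_1: "shift_int Sh 1 X = Sh X"
  by (simp add: shift_int_def)

text \<open>X[k+1] = X[k][1]; for negative k this uses surjectivity of the shift.\<close>
lemma shift_int_succ:
  assumes "bij Sh"
  shows "shift_int Sh (k + 1) X = Sh (shift_int Sh k X)"
proof -
  have Sh_inv: "Sh (inv Sh y) = y" for y
    using assms by (simp add: bij_is_surj surj_f_inv_f)
  consider "0 \<le> k" | "k = -1" | "k < -1" by linarith
  then show ?thesis
  proof cases
    case 1
    then have "nat (k + 1) = Suc (nat k)" by simp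
    with 1 show ?thesis by (simp add: shift_int_def)
  next
    case 2
    then show ?thesis by (simp add: shift_int_def Sh_inv)
  next
    case 3
    then have "nat (-k) = Suc (nat (- (k + 1)))" by simp
    with 3 show ?thesis by (simp add: shift_int_def Sh_inv)
  qed
qed

lemma shift_int_pred:
  assumes "bij Sh"
  shows "shift_int Sh (k - 1) X = inv Sh (shift_int Sh k X)"
proof -
  have "shift_int Sh k X = Sh (shift_int Sh (k - 1) X)"
    using shift_int_succ[OF assms, of "k - 1" X] by simp
  then show ?thesis using assms by (simp add: bij_is_inj inv_f_f)
qed

lemma shift_int_add:
  assumes "bij Sh"
  shows "shift_int Sh (j + k) X = shift_int Sh j (shift_int Sh k X)"
proof (induction j rule: int_induct[where k = 0])
  case base
  then show ?case by (simp add: shift_int_0)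
next
  case (step1 i)
  have "shift_int Sh (i + 1 + k) X = Sh (shift_int Sh (i + k) X)"
    using shift_int_succ[OF assms, of "i + k" X] by (simp add: algebra_simps)
  then show ?case using step1 shift_int_succ[OF assms] by simp
next
  case (step2 i)
  have "shift_int Sh (i - 1 + k) X = inv Sh (shift_int Sh (i + k) X)"
    using shift_int_pred[OF assms, of "i + k" X] by (simp add: algebra_simps)
  then show ?case using step2 shift_int_pred[OF assms] by simp
qed

context triangulated
begin

lemma add_zero_right: "f \<in> Hom X Y \<Longrightarrow> add X Y f (zero X Y) = f"
  using add_comm[OF _ zero_closed, of f X Y] zero_left[of f X Y] by simp

lemma add_neg_right: "f \<in> Hom X Y \<Longrightarrow> add X Y f (neg X Y f) = zero X Y"
  using add_comm[OF _ neg_closed, of f X Y f] neg_left[of f X Y] by simp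

lemma add_cancel_left:
  assumes "a \<in> Hom X Y" "b \<in> Hom X Y" "c \<in> Hom X Y" "add X Y c a = add X Y c b"
  shows "a = b"
proof -
  have "a = add X Y (add X Y (neg X Y c) c) a" using assms by (simp add: neg_left zero_left)
  also have "\<dots> = add X Y (neg X Y c) (add X Y c a)" using assms by (simp add: add_assoc neg_closed)
  also have "\<dots> = add X Y (neg X Y c) (add X Y c b)" using assms by simp
  also have "\<dots> = add X Y (add X Y (neg X Y c) c) b" using assms by (simp add: add_assoc neg_closed)
  also have "\<dots> = b" using assms by (simp add: neg_left zero_left)
  finally show ?thesis .
qed

lemma idem_zero: "a \<in> Hom X Y \<Longrightarrow> add X Y a a = a \<Longrightarrow> a = zero X Y"
  using add_cancel_left[of a X Y "zero X Y" a] add_zero_right[of a X Y] zero_closed[of X Y] by simp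

lemma neg_unique: "x \<in> Hom X Y \<Longrightarrow> y \<in> Hom X Y \<Longrightarrow> add X Y x y = zero X Y \<Longrightarrow> x = neg X Y y"
  using add_cancel_left[of x X Y "neg X Y y" y] add_comm[of x X Y y] add_neg_right[of y X Y]
    neg_closed[of y X Y] by simp

lemma neg_neg: "a \<in> Hom X Y \<Longrightarrow> neg X Y (neg X Y a) = a"
  using neg_unique[of a X Y "neg X Y a"] add_neg_right[of a X Y] neg_closed[of a X Y] by simp

lemma neg_zero: "neg X Y (zero X Y) = zero X Y"
  using neg_unique[of "zero X Y" X Y "zero X Y"] add_zero_right[of "zero X Y" X Y] zero_closed[of X Y]
  by simp

lemma neg_inj: "a \<in> Hom X Y \<Longrightarrow> b \<in> Hom X Y \<Longrightarrow> neg X Y a = neg X Y b \<Longrightarrow> a = b"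
  by (metis neg_neg)

lemma add_neg_cancel: "a \<in> Hom X Y \<Longrightarrow> b \<in> Hom X Y \<Longrightarrow> add X Y (add X Y a (neg X Y b)) b = a"
  by (simp add: add_assoc neg_closed neg_left add_zero_right)

lemma comp_zero_left: "f \<in> Hom X Y \<Longrightarrow> comp (zero Y Z) f = zero X Z"
proof -
  assume f: "f \<in> Hom X Y"
  have "comp (zero Y Z) f = comp (add Y Z (zero Y Z) (zero Y Z)) f"
    by (simp add: zero_left zero_closed)
  also have "\<dots> = add X Z (comp (zero Y Z) f) (comp (zero Y Z) f)"
    using f by (simp add: comp_add_left zero_closed)
  finally have "add X Z (comp (zero Y Z) f) (comp (zero Y Z) f) = comp (zero Y Z) f" by (rule sym)
  then show ?thesis by (rule idem_zero[OF comp_closed[OF f zero_closed]])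
qed

lemma comp_zero_right: "g \<in> Hom Y Z \<Longrightarrow> comp g (zero X Y) = zero X Z"
proof -
  assume g: "g \<in> Hom Y Z"
  have "comp g (zero X Y) = comp g (add X Y (zero X Y) (zero X Y))"
    by (simp add: zero_left zero_closed)
  also have "\<dots> = add X Z (comp g (zero X Y)) (comp g (zero X Y))"
    using g by (simp add: comp_add_right zero_closed)
  finally have "add X Z (comp g (zero X Y)) (comp g (zero X Y)) = comp g (zero X Y)" by (rule sym)
  then show ?thesis by (rule idem_zero[OF comp_closed[OF zero_closed g]])
qed

lemma comp_neg_left: "f \<in> Hom X Y \<Longrightarrow> g \<in> Hom Y Z \<Longrightarrow> comp (neg Y Z g) f = neg X Z (comp g f)"
proof -
  assume f: "f \<in> Hom X Y" and g: "g \<in> Hom Y Z"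
  have "add X Z (comp (neg Y Z g) f) (comp g f) = comp (add Y Z (neg Y Z g) g) f"
    using comp_add_left[OF f neg_closed[OF g] g] by simp
  also have "\<dots> = zero X Z" using neg_left[OF g] comp_zero_left[OF f] by simp
  finally show ?thesis by (rule neg_unique[OF comp_closed[OF f neg_closed[OF g]] comp_closed[OF f g]])
qed

lemma comp_neg_right: "f \<in> Hom X Y \<Longrightarrow> g \<in> Hom Y Z \<Longrightarrow> comp g (neg X Y f) = neg X Z (comp g f)"
proof -
  assume f: "f \<in> Hom X Y" and g: "g \<in> Hom Y Z"
  have "add X Z (comp g (neg X Y f)) (comp g f) = comp g (add X Y (neg X Y f) f)"
    using comp_add_right[OF neg_closed[OF f] f g] by simp
  also have "\<dots> = zero X Z" using neg_left[OF f] comp_zero_right[OF g] by simp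
  finally show ?thesis by (rule neg_unique[OF comp_closed[OF neg_closed[OF f] g] comp_closed[OF f g]])
qed

lemma shm_closed: "f \<in> Hom X Y \<Longrightarrow> shm f \<in> Hom (Sh X) (Sh Y)"
  by (rule bij_betw_apply[OF shm_bij])

lemma shm_zero: "shm (zero X Y) = zero (Sh X) (Sh Y)"
proof (rule idem_zero[OF shm_closed[OF zero_closed]])
  have "shm (zero X Y) = shm (add X Y (zero X Y) (zero X Y))" using zero_left[OF zero_closed[of X Y]] by simp
  also have "\<dots> = add (Sh X) (Sh Y) (shm (zero X Y)) (shm (zero X Y))"
    by (rule shm_add[OF zero_closed zero_closed])
  finally show "add (Sh X) (Sh Y) (shm (zero X Y)) (shm (zero X Y)) = shm (zero X Y)" by (rule sym)
qed

lemma shm_inj: "f \<in> Hom X Y \<Longrightarrow> g \<in> Hom X Y \<Longrightarrow> shm f = shm g \<Longrightarrow> f = g"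
  using inj_onD[OF bij_betw_imp_inj_on[OF shm_bij[of X Y]]] by blast

lemma shm_surj: "h \<in> Hom (Sh X) (Sh Y) \<Longrightarrow> \<exists>g\<in>Hom X Y. h = shm g"
  using bij_betw_imp_surj_on[OF shm_bij[of X Y]] by blast

section \<open>Exactness of Hom along distinguished triangles\<close>

lemma dist_rotate:
  "dist X Y Z u v w \<Longrightarrow> dist Y Z (Sh X) v w (neg (Sh X) (Sh Y) (shm u))"
  using TR2 dist_typed by blast

text \<open>Two consecutive maps of a triangle compose to zero (compare with X = X -> 0).\<close>
lemma dist_comp_zero:
  assumes d: "dist X Y Z u v w"
  shows "comp v u = zero X Z"
proof -
  obtain Z0 where Z0: "is_zero_obj Hom zero Z0" using has_zero_obj by blast
  have u: "u \<in> Hom X Y" using dist_typed[OF d] by blast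
  obtain h where "h \<in> Hom Z0 Z" "comp v u = comp h (zero X Z0)"
    using TR3[OF TR1_ident[OF Z0] d ident_closed u] u ident_right by metis
  then show ?thesis by (simp add: comp_zero_right)
qed

text \<open>Hom(W,-) is exact at Y: a map W -> Y killed by v lifts along u.
  Compare the rotated triangles of W -> 0 -> W[1] and of u, then unshift.\<close>
lemma dist_lift:
  assumes d: "dist X Y Z u v w" and f: "f \<in> Hom W Y" and vf: "comp v f = zero W Z"
  shows "\<exists>g\<in>Hom W X. f = comp u g"
proof -
  obtain Z0 where Z0: "is_zero_obj Hom zero Z0" using has_zero_obj by blast
  have u: "u \<in> Hom X Y" using dist_typed[OF d] by blast
  have s: "dist W Z0 (Sh W) (zero W Z0) (zero Z0 (Sh W)) (neg (Sh W) (Sh W) (shm (ident W)))"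
    using dist_rotate[OF TR1_ident[OF Z0, of W]] .
  have "comp v f = comp (zero Z0 Z) (zero W Z0)"
    using vf comp_zero_left[OF zero_closed[of W Z0], of Z] by simp
  then obtain h where h: "h \<in> Hom (Sh W) (Sh X)"
    "comp (neg (Sh X) (Sh Y) (shm u)) h = comp (shm f) (neg (Sh W) (Sh W) (shm (ident W)))"
    using TR3[OF s dist_rotate[OF d] f zero_closed] by blast
  have "neg (Sh W) (Sh Y) (comp (shm u) h) = neg (Sh W) (Sh Y) (shm f)"
    using h comp_neg_left[OF h(1) shm_closed[OF u]] comp_neg_right[OF ident_closed shm_closed[OF f]]
    by (simp add: shm_ident ident_right[OF shm_closed[OF f]])
  then have e: "comp (shm u) h = shm f"
    using neg_inj comp_closed h(1) shm_closed u f by blast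
  obtain g where g: "g \<in> Hom W X" "h = shm g" using shm_surj h(1) by blast
  have "shm (comp u g) = shm f" using e g shm_comp u by simp
  then have "comp u g = f" using shm_inj comp_closed g(1) u f by blast
  then show ?thesis using g by blast
qed

text \<open>Hom(-,W) is exact at Y: a map Y -> W killed by u extends along v.
  Compare with the triangle 0[-1] -> W = W -> 0.\<close>
lemma dist_extend:
  assumes d: "dist X Y Z u v w" and g: "g \<in> Hom Y W" and gu: "comp g u = zero X W"
  shows "\<exists>h\<in>Hom Z W. g = comp h v"
proof -
  obtain Z0 where Z0: "is_zero_obj Hom zero Z0" using has_zero_obj by blast
  define P where "P = inv Sh Z0"
  have SP: "Sh P = Z0" unfolding P_def using Sh_bij by (simp add: bij_is_surj surj_f_inv_f)
  have "dist W W (Sh P) (ident W) (zero W (Sh P)) (neg (Sh P) (Sh W) (shm (zero P W)))"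
    using TR1_ident[OF Z0, of W] SP by (simp add: shm_zero neg_zero)
  then have t: "dist P W W (zero P W) (ident W) (zero W (Sh P))"
    using TR2[OF zero_closed] by blast
  have "comp (zero P W) (zero X P) = comp g u"
    using gu comp_zero_left[OF zero_closed[of X P], of W] by simp
  then obtain h where "h \<in> Hom Z W" "comp (ident W) g = comp h v"
    using TR3[OF d t zero_closed g] by blast
  then show ?thesis using g ident_left by metis
qed

definition vanishes :: "'o \<Rightarrow> 'o \<Rightarrow> bool" where
  "vanishes X Y \<longleftrightarrow> Hom X Y = {zero X Y}"

lemma vanishesD: "vanishes X Y \<Longrightarrow> f \<in> Hom X Y \<Longrightarrow> f = zero X Y"
  unfolding vanishes_def by blast

lemma vanishesI: "(\<And>f. f \<in> Hom X Y \<Longrightarrow> f = zero X Y) \<Longrightarrow> vanishes X Y"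
  unfolding vanishes_def using zero_closed by blast

lemma exceptional_iff_vanishes:
  "exceptional Hom zero Sh X \<longleftrightarrow> (\<forall>k. k \<noteq> 0 \<longrightarrow> vanishes X (shift_int Sh k X))"
  by (simp add: exceptional_def vanishes_def)

lemma vanishes_into_middle:
  assumes d: "dist X Y Z u v w" and "vanishes W X" "vanishes W Z"
  shows "vanishes W Y"
proof (rule vanishesI)
  fix f assume f: "f \<in> Hom W Y"
  have u: "u \<in> Hom X Y" and v: "v \<in> Hom Y Z" using dist_typed[OF d] by auto
  have "comp v f = zero W Z" using assms(3) comp_closed[OF f v] by (rule vanishesD)
  then obtain g where "g \<in> Hom W X" "f = comp u g" using dist_lift[OF d f] by blast
  then show "f = zero W Y" using vanishesD[OF assms(2)] comp_zero_right[OF u] by auto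
qed

lemma vanishes_from_middle:
  assumes d: "dist X Y Z u v w" and "vanishes X W" "vanishes Z W"
  shows "vanishes Y W"
proof (rule vanishesI)
  fix g assume g: "g \<in> Hom Y W"
  have u: "u \<in> Hom X Y" and v: "v \<in> Hom Y Z" using dist_typed[OF d] by auto
  have "comp g u = zero X W" using assms(2) comp_closed[OF u g] by (rule vanishesD)
  then obtain h where "h \<in> Hom Z W" "g = comp h v" using dist_extend[OF d g] by blast
  then show "g = zero Y W" using vanishesD[OF assms(3)] comp_zero_left[OF v] by auto
qed

lemma vanishes_Sh_iff: "vanishes (Sh X) (Sh Y) \<longleftrightarrow> vanishes X Y"
proof
  assume a: "vanishes (Sh X) (Sh Y)"
  show "vanishes X Y"
    using shm_inj[OF _ zero_closed] vanishesD[OF a shm_closed] by (auto intro: vanishesI simp: shm_zero)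
next
  assume "vanishes X Y"
  moreover have "Hom (Sh X) (Sh Y) = shm ` Hom X Y" using shm_bij[of X Y] by (simp add: bij_betw_def)
  ultimately show "vanishes (Sh X) (Sh Y)" by (simp add: vanishes_def shm_zero)
qed

lemma vanishes_shift_iff: "vanishes (shift_int Sh j X) (shift_int Sh j Y) \<longleftrightarrow> vanishes X Y"
proof (induction j rule: int_induct[where k = 0])
  case base
  then show ?case by (simp add: shift_int_0)
next
  case (step1 i)
  then show ?case using vanishes_Sh_iff shift_int_succ[OF Sh_bij] by simp
next
  case (step2 i)
  have Sh_inv: "Sh (inv Sh y) = y" for y using Sh_bij by (simp add: bij_is_surj surj_f_inv_f)
  show ?case
    using step2 vanishes_Sh_iff[of "inv Sh (shift_int Sh i X)" "inv Sh (shift_int Sh i Y)"]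
      shift_int_pred[OF Sh_bij] Sh_inv by simp
qed

lemma vanishes_shift_adjoint: "vanishes X (shift_int Sh k Y) \<longleftrightarrow> vanishes (shift_int Sh (-k) X) Y"
  using vanishes_shift_iff[of k "shift_int Sh (-k) X" Y] shift_int_add[OF Sh_bij, of k "-k" X]
  by (simp add: shift_int_0)

lemma dist_vanishes_degree:
  assumes d: "dist X Y Z u v w"
    and XX: "vanishes X (shift_int Sh k X)" and XZ: "vanishes X (shift_int Sh k Z)"
    and ZX: "vanishes Z (shift_int Sh k X)" and ZZ: "vanishes Z (shift_int Sh k Z)"
  shows "vanishes Y (shift_int Sh k Y)"
proof -
  have "vanishes (shift_int Sh (-k) X) Y"
    using vanishes_into_middle[OF d] XX XZ by (simp add: vanishes_shift_adjoint)
  then have XY: "vanishes X (shift_int Sh k Y)" by (simp add: vanishes_shift_adjoint)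
  have "vanishes (shift_int Sh (-k) Z) Y"
    using vanishes_into_middle[OF d] ZX ZZ by (simp add: vanishes_shift_adjoint)
  then have ZY: "vanishes Z (shift_int Sh k Y)" by (simp add: vanishes_shift_adjoint)
  show ?thesis by (rule vanishes_from_middle[OF d XY ZY])
qed

section \<open>Self-extensions of degree one of the middle term\<close>

text \<open>First beta[1] chi gamma = 0 makes beta[1] chi factor through
  alpha as r[1] alpha, and gamma r = 0 makes r = beta g; then chi - g[1] alpha is killed
  by beta[1], so it factors through alpha on the right.\<close>
lemma degree_one_surjective:
  assumes d: "dist T1 T T2 \<beta> \<gamma> \<alpha>"
    and TT: "vanishes T (Sh T)" and T12: "vanishes T1 T2"
    and chi: "\<chi> \<in> Hom T2 (Sh T1)"
  shows "\<exists>f\<in>Hom T2 T2. \<exists>g\<in>Hom T1 T1. \<chi> = add T2 (Sh T1) (comp \<alpha> f) (comp (shm g) \<alpha>)"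
proof -
  have b: "\<beta> \<in> Hom T1 T" and c: "\<gamma> \<in> Hom T T2" and a: "\<alpha> \<in> Hom T2 (Sh T1)"
    using dist_typed[OF d] by auto
  let ?b1 = "shm \<beta>" and ?nb1 = "neg (Sh T1) (Sh T) (shm \<beta>)"
  have b1: "?b1 \<in> Hom (Sh T1) (Sh T)" by (rule shm_closed[OF b])
  have R1: "dist T T2 (Sh T1) \<gamma> \<alpha> ?nb1" by (rule dist_rotate[OF d])
  have R2: "dist T2 (Sh T1) (Sh T) \<alpha> ?nb1 (neg (Sh T) (Sh T2) (shm \<gamma>))" by (rule dist_rotate[OF R1])
  define \<psi> where "\<psi> = comp ?b1 \<chi>"
  have psi: "\<psi> \<in> Hom T2 (Sh T)" unfolding \<psi>_def by (rule comp_closed[OF chi b1])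
  have "comp \<psi> \<gamma> = zero T (Sh T)" using TT comp_closed[OF c psi] by (rule vanishesD)
  then obtain \<rho> where rho: "\<rho> \<in> Hom (Sh T1) (Sh T)" "\<psi> = comp \<rho> \<alpha>"
    using dist_extend[OF R1 psi] by blast
  obtain r where r: "r \<in> Hom T1 T" "\<rho> = shm r" using shm_surj[OF rho(1)] by blast
  have "comp \<gamma> r = zero T1 T2" using T12 comp_closed[OF r(1) c] by (rule vanishesD)
  then obtain g where g: "g \<in> Hom T1 T1" "r = comp \<beta> g" using dist_lift[OF d r(1)] by blast
  define x where "x = comp (shm g) \<alpha>"
  have x: "x \<in> Hom T2 (Sh T1)" unfolding x_def by (rule comp_closed[OF a shm_closed[OF g(1)]])
  have psi_x: "\<psi> = comp ?b1 x"
    using rho(2) r(2) g(2) shm_comp[OF g(1) b] comp_assoc[OF a shm_closed[OF g(1)] b1]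
    unfolding x_def by simp
  define \<delta> where "\<delta> = add T2 (Sh T1) \<chi> (neg T2 (Sh T1) x)"
  have delta: "\<delta> \<in> Hom T2 (Sh T1)" unfolding \<delta>_def by (rule add_closed[OF chi neg_closed[OF x]])
  have "comp ?b1 \<delta> = add T2 (Sh T) \<psi> (neg T2 (Sh T) \<psi>)"
    unfolding \<delta>_def \<psi>_def using comp_add_right[OF chi neg_closed[OF x] b1] comp_neg_right[OF x b1] psi_x
    by (simp add: \<psi>_def)
  then have "comp ?b1 \<delta> = zero T2 (Sh T)" using add_neg_right[OF psi] by simp
  then have "comp ?nb1 \<delta> = zero T2 (Sh T)" using comp_neg_left[OF delta b1] neg_zero by simp
  then obtain f where f: "f \<in> Hom T2 T2" "\<delta> = comp \<alpha> f" using dist_lift[OF R2 delta] by blast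
  have "\<chi> = add T2 (Sh T1) \<delta> x" unfolding \<delta>_def by (rule add_neg_cancel[OF chi x, symmetric])
  then show ?thesis using f g(1) unfolding x_def by blast
qed

text \<open>Conversely, if Hom(T1,T1[1]), Hom(T1,T2[1]), Hom(T2,T2[1]) vanish and the
  action is surjective, then Hom(T,T[1]) = 0: a map phi : T -> T[1] factors as
  -beta[1] chi gamma, and both summands of chi = alpha f + g[1] alpha are killed
  (beta[1] alpha = 0 and alpha gamma = 0).\<close>
lemma degree_one_vanishes:
  assumes d: "dist T1 T T2 \<beta> \<gamma> \<alpha>"
    and T11: "vanishes T1 (Sh T1)" and T12: "vanishes T1 (Sh T2)" and T22: "vanishes T2 (Sh T2)"
    and surj: "\<And>\<chi>. \<chi> \<in> Hom T2 (Sh T1) \<Longrightarrow>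
      \<exists>f\<in>Hom T2 T2. \<exists>g\<in>Hom T1 T1. \<chi> = add T2 (Sh T1) (comp \<alpha> f) (comp (shm g) \<alpha>)"
  shows "vanishes T (Sh T)"
proof (rule vanishesI)
  fix \<phi> assume phi: "\<phi> \<in> Hom T (Sh T)"
  have b: "\<beta> \<in> Hom T1 T" and c: "\<gamma> \<in> Hom T T2" and a: "\<alpha> \<in> Hom T2 (Sh T1)"
    using dist_typed[OF d] by auto
  define nb where "nb = neg (Sh T1) (Sh T) (shm \<beta>)"
  have nb: "nb \<in> Hom (Sh T1) (Sh T)" unfolding nb_def by (rule neg_closed[OF shm_closed[OF b]])
  have R1: "dist T T2 (Sh T1) \<gamma> \<alpha> nb" unfolding nb_def by (rule dist_rotate[OF d])
  have R2: "dist T2 (Sh T1) (Sh T) \<alpha> nb (neg (Sh T) (Sh T2) (shm \<gamma>))" by (rule dist_rotate[OF R1])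
  have R3: "dist (Sh T1) (Sh T) (Sh T2) nb (neg (Sh T) (Sh T2) (shm \<gamma>)) (neg (Sh T2) (Sh (Sh T1)) (shm \<alpha>))"
    by (rule dist_rotate[OF R2])
  have ng: "neg (Sh T) (Sh T2) (shm \<gamma>) \<in> Hom (Sh T) (Sh T2)" by (rule neg_closed[OF shm_closed[OF c]])
  have "vanishes T1 (Sh T)" by (rule vanishes_into_middle[OF R3 T11 T12])
  then have "comp \<phi> \<beta> = zero T1 (Sh T)" using comp_closed[OF b phi] by (rule vanishesD)
  then obtain \<psi> where psi: "\<psi> \<in> Hom T2 (Sh T)" "\<phi> = comp \<psi> \<gamma>" using dist_extend[OF d phi] by blast
  have "comp (neg (Sh T) (Sh T2) (shm \<gamma>)) \<psi> = zero T2 (Sh T2)"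
    using T22 comp_closed[OF psi(1) ng] by (rule vanishesD)
  then obtain \<chi> where chi: "\<chi> \<in> Hom T2 (Sh T1)" "\<psi> = comp nb \<chi>" using dist_lift[OF R3 psi(1)] by blast
  obtain f g where f: "f \<in> Hom T2 T2" and g: "g \<in> Hom T1 T1"
    and fg: "\<chi> = add T2 (Sh T1) (comp \<alpha> f) (comp (shm g) \<alpha>)"
    using surj[OF chi(1)] by blast
  have af: "comp \<alpha> f \<in> Hom T2 (Sh T1)" by (rule comp_closed[OF f a])
  have sg: "shm g \<in> Hom (Sh T1) (Sh T1)" by (rule shm_closed[OF g])
  have ga: "comp (shm g) \<alpha> \<in> Hom T2 (Sh T1)" by (rule comp_closed[OF a sg])
  have alpha_gamma: "comp \<alpha> \<gamma> = zero T (Sh T1)" by (rule dist_comp_zero[OF R1])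
  have nb_alpha: "comp nb \<alpha> = zero T2 (Sh T)" by (rule dist_comp_zero[OF R2])
  have "\<phi> = comp nb (comp \<chi> \<gamma>)" using psi(2) chi comp_assoc[OF c chi(1) nb] by simp
  also have "comp \<chi> \<gamma> = add T (Sh T1) (comp (comp \<alpha> f) \<gamma>) (comp (comp (shm g) \<alpha>) \<gamma>)"
    using fg comp_add_left[OF c af ga] by simp
  also have "comp (comp (shm g) \<alpha>) \<gamma> = zero T (Sh T1)"
    using comp_assoc[OF c a sg] alpha_gamma comp_zero_right[OF sg] by simp
  also have "add T (Sh T1) (comp (comp \<alpha> f) \<gamma>) (zero T (Sh T1)) = comp \<alpha> (comp f \<gamma>)"
    using add_zero_right[OF comp_closed[OF c af]] comp_assoc[OF c f a] by simp
  also have "comp nb (comp \<alpha> (comp f \<gamma>)) = comp (comp nb \<alpha>) (comp f \<gamma>)"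
    by (rule comp_assoc[OF comp_closed[OF c f] a nb])
  also have "\<dots> = zero T (Sh T)" using nb_alpha comp_zero_left[OF comp_closed[OF c f]] by simp
  finally show "\<phi> = zero T (Sh T)" .
qed

end

theorem proposition2p1:
  fixes Hom :: "'o \<Rightarrow> 'o \<Rightarrow> 'm set"
    and comp :: "'m \<Rightarrow> 'm \<Rightarrow> 'm"
    and ident :: "'o \<Rightarrow> 'm"
    and add :: "'o \<Rightarrow> 'o \<Rightarrow> 'm \<Rightarrow> 'm \<Rightarrow> 'm"
    and zero :: "'o \<Rightarrow> 'o \<Rightarrow> 'm"
    and neg :: "'o \<Rightarrow> 'o \<Rightarrow> 'm \<Rightarrow> 'm"
    and Sh :: "'o \<Rightarrow> 'o"
    and shm :: "'m \<Rightarrow> 'm"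
    and dist :: "'o \<Rightarrow> 'o \<Rightarrow> 'o \<Rightarrow> 'm \<Rightarrow> 'm \<Rightarrow> 'm \<Rightarrow> bool"
    and T1 T2 T :: 'o
    and \<alpha> \<beta> \<gamma> :: 'm
  assumes tri: "triangulated Hom comp ident add zero neg Sh shm dist"
    and coprod: "has_coproducts_indexed_by TYPE('i) Hom comp"
    and exc1: "exceptional Hom zero Sh T1"
    and exc2: "exceptional Hom zero Sh T2"
    and A1: "\<forall>k::int. Hom T1 (shift_int Sh k T2) = {zero T1 (shift_int Sh k T2)}"
    and A2: "\<forall>k::int. k \<notin> {0, 1} \<longrightarrow> Hom T2 (shift_int Sh k T1) = {zero T2 (shift_int Sh k T1)}"
    and alpha: "\<alpha> \<in> Hom T2 (Sh T1)"
    and triangle: "dist T1 T T2 \<beta> \<gamma> \<alpha>"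
  shows "exceptional Hom zero Sh T \<longleftrightarrow>
    (\<lambda>(f, g). add T2 (Sh T1) (comp \<alpha> f) (comp (shm g) \<alpha>)) ` (Hom T2 T2 \<times> Hom T1 T1)
      = Hom T2 (Sh T1)"
proof -
  interpret triangulated Hom comp ident add zero neg Sh shm dist by (rule tri)
  let ?act = "\<lambda>(f, g). add T2 (Sh T1) (comp \<alpha> f) (comp (shm g) \<alpha>)"
  have e1: "\<And>k. k \<noteq> 0 \<Longrightarrow> vanishes T1 (shift_int Sh k T1)"
    and e2: "\<And>k. k \<noteq> 0 \<Longrightarrow> vanishes T2 (shift_int Sh k T2)"
    using exc1 exc2 by (simp_all add: exceptional_iff_vanishes)
  have a1: "\<And>k. vanishes T1 (shift_int Sh k T2)"
    and a2: "\<And>k. k \<notin> {0, 1} \<Longrightarrow> vanishes T2 (shift_int Sh k T1)"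
    using A1 A2 by (simp_all add: vanishes_def)
  have T11: "vanishes T1 (Sh T1)" and T22: "vanishes T2 (Sh T2)"
    and T12: "vanishes T1 T2" and T12': "vanishes T1 (Sh T2)"
    using e1[of 1] e2[of 1] a1[of 0] a1[of 1] by (simp_all add: shift_int_0 shift_int_1)
  have deg: "vanishes T (shift_int Sh k T)" if "k \<notin> {0, 1}" for k
    using dist_vanishes_degree[OF triangle] e1 e2 a1 a2 that by simp
  have "exceptional Hom zero Sh T \<longleftrightarrow> vanishes T (Sh T)"
  proof
    assume "exceptional Hom zero Sh T"
    then show "vanishes T (Sh T)"
      using exceptional_iff_vanishes[of T] shift_int_1[of Sh T] by (metis zero_neq_one)
  next
    assume "vanishes T (Sh T)"
    then show "exceptional Hom zero Sh T"
      unfolding exceptional_iff_vanishes using deg shift_int_1[of Sh T] by (metis insertE singletonD)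
  qed
  also have "\<dots> \<longleftrightarrow> (\<forall>\<chi>\<in>Hom T2 (Sh T1). \<chi> \<in> ?act ` (Hom T2 T2 \<times> Hom T1 T1))"
  proof
    assume "vanishes T (Sh T)"
    with degree_one_surjective[OF triangle _ T12]
    show "\<forall>\<chi>\<in>Hom T2 (Sh T1). \<chi> \<in> ?act ` (Hom T2 T2 \<times> Hom T1 T1)" by fastforce
  next
    assume "\<forall>\<chi>\<in>Hom T2 (Sh T1). \<chi> \<in> ?act ` (Hom T2 T2 \<times> Hom T1 T1)"
    then show "vanishes T (Sh T)"
      using degree_one_vanishes[OF triangle T11 T12' T22]
      by fastforce
  qed
  also have "\<dots> \<longleftrightarrow> ?act ` (Hom T2 T2 \<times> Hom T1 T1) = Hom T2 (Sh T1)"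
    using alpha by (auto intro!: add_closed comp_closed shm_closed)
  finally show ?thesis .
qed

end
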